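(* Let $f\colon M\to\mathbb H$ be a minimal conformal immersion with right normal $R$, and let $d^S_\lambda$ be the associated family of connections of its conformal Gauss map. For $\mu\in\mathbb C\setminus\{0,1\}$, a section $\varphi\colon\tilde M\to\mathbb H^2$ is $d^S_\mu$-parallel if and only if either $\varphi=en$ for a constant $n\in\mathbb H$, or $\varphi=e\alpha+\psi\beta$ with $$\alpha=-f^*m-fm\,\frac{i(1+\mu)}{1-\mu},\qquad \beta=Rm+m\,\frac{i(1+\mu)}{1-\mu}$$ for some $m\in\mathbb H_*$ and some conjugate surface $f^*$ of $f$.
   Context: Quaternions $\mathbb H$, $\mathbb H_*=\mathbb H\setminus\{0\}$, $\mathbb C=\operatorname{span}_{\mathbb R}\{1,i\}\subset\mathbb H$. $M$ Riemann surface, $\tilde M$ its universal cover, $*\omega(X)=\omega(JX)$. Normals: $*df=N\,df=-df\,R$. A conjugate surface $f^*\colon\tilde M\to\mathbb H$ satisfies $df^*=-*df$. On $\tilde M\times\mathbb H^2$ (quaternionic right module, complex structure $I$ = right multiplication by $i$) let $e=(1,0)^t$, $\psi=(f,1)^t$, $G=\begin{pmatrix}1&f\\0&1\end{pmatrix}$. For minimal $f$ the Hopf field $A$ of the conformal Gauss map is the $\operatorname{End}(\mathbb H^2)$-valued 1-form with $2*A=G\begin{pmatrix}0&0\\0&dR\end{pmatrix}G^{-1}$. Put $A^{(1,0)}\varphi=\tfrac12(A\varphi-( *A\varphi)i)$, $A^{(0,1)}\varphi=\tfrac12(A\varphi+( *A\varphi)i)$ and $d^S_\lambda=d+(\lambda-1)A^{(1,0)}+(\lambda^{-1}-1)A^{(0,1)}$,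 $\lambda\in\mathbb C_*$. *)

theory Defs
  imports "HOL-Analysis.Analysis"
begin

text \<open>Quaternions via Cayley-Dickson: (a,b) represents a + b j with a,b complex,
  so that a + b j = a0 + a1 i + (b0 + b1 i) j.  The norm and inner product of the
  product type complex \<times> complex are the Euclidean ones of R^4.\<close>

type_synonym quat = "complex \<times> complex"

definition qmul :: "quat \<Rightarrow> quat \<Rightarrow> quat" where
  "qmul p q = (fst p * fst q - snd p * cnj (snd q), fst p * snd q + snd p * cnj (fst q))"

definition qc :: "complex \<Rightarrow> quat" where
  "qc z = (z, 0)"

definition qi :: quat where
  "qi = qc \<i>"

definition rmul2 :: "quat \<times> quat \<Rightarrow> quat \<Rightarrow> quat \<times> quat" where
  "rmul2 w q = (qmul (fst w) q, qmul (snd w) q)"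

text \<open>Differential: dF_z(X), with tangent vectors X in C (complex structure J X = i X).\<close>
definition D :: "(complex \<Rightarrow> 'a::real_normed_vector) \<Rightarrow> complex \<Rightarrow> complex \<Rightarrow> 'a" where
  "D F z = frechet_derivative F (at z)"

fun Ck_on :: "nat \<Rightarrow> (complex \<Rightarrow> 'a::real_normed_vector) \<Rightarrow> complex set \<Rightarrow> bool" where
  "Ck_on 0 F U = continuous_on U F"
| "Ck_on (Suc k) F U = ((\<forall>z\<in>U. F differentiable (at z)) \<and> (\<forall>v. Ck_on k (\<lambda>z. D F z v) U))"

definition smooth_on :: "(complex \<Rightarrow> 'a::real_normed_vector) \<Rightarrow> complex set \<Rightarrow> bool" where
  "smooth_on F U = (\<forall>k. Ck_on k F U)"

definition conformal_immersion :: "(complex \<Rightarrow> quat) \<Rightarrow> complex set \<Rightarrow> bool" where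
  "conformal_immersion f U =
     (smooth_on f U \<and>
      (\<forall>z\<in>U. D f z 1 \<noteq> 0 \<and> norm (D f z 1) = norm (D f z \<i>) \<and> inner (D f z 1) (D f z \<i>) = 0))"

text \<open>Minimal (for a conformal immersion): harmonic, i.e. d*df = 0.\<close>
definition minimal_on :: "(complex \<Rightarrow> quat) \<Rightarrow> complex set \<Rightarrow> bool" where
  "minimal_on f U = (\<forall>z\<in>U. D (\<lambda>w. D f w 1) z 1 + D (\<lambda>w. D f w \<i>) z \<i> = 0)"

definition right_normal :: "(complex \<Rightarrow> quat) \<Rightarrow> (complex \<Rightarrow> quat) \<Rightarrow> complex set \<Rightarrow> bool" where
  "right_normal f R U = (\<forall>z\<in>U. \<forall>X. D f z (\<i> * X) = - qmul (D f z X) (R z))"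

definition conjugate_surface :: "(complex \<Rightarrow> quat) \<Rightarrow> (complex \<Rightarrow> quat) \<Rightarrow> complex set \<Rightarrow> bool" where
  "conjugate_surface f fs U =
     ((\<forall>z\<in>U. fs differentiable (at z)) \<and> (\<forall>z\<in>U. \<forall>X. D fs z X = - D f z (\<i> * X)))"

text \<open>*A at z applied to X and v = (v1,v2):  (1/2) G diag(0,dR(X)) G^{-1} v
  = (1/2) (f dR(X) v2, dR(X) v2).\<close>
definition starA :: "(complex \<Rightarrow> quat) \<Rightarrow> (complex \<Rightarrow> quat) \<Rightarrow> complex \<Rightarrow> complex \<Rightarrow> quat \<times> quat \<Rightarrow> quat \<times> quat" where
  "starA f R z X v = (1/2) *\<^sub>R (qmul (qmul (f z) (D R z X)) (snd v), qmul (D R z X) (snd v))"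

text \<open>A(X) = - (*A)(JX), since ** = -1.\<close>
definition hopfA :: "(complex \<Rightarrow> quat) \<Rightarrow> (complex \<Rightarrow> quat) \<Rightarrow> complex \<Rightarrow> complex \<Rightarrow> quat \<times> quat \<Rightarrow> quat \<times> quat" where
  "hopfA f R z X v = - starA f R z (\<i> * X) v"

definition A10 :: "(complex \<Rightarrow> quat) \<Rightarrow> (complex \<Rightarrow> quat) \<Rightarrow> complex \<Rightarrow> complex \<Rightarrow> quat \<times> quat \<Rightarrow> quat \<times> quat" where
  "A10 f R z X v = (1/2) *\<^sub>R (hopfA f R z X v - rmul2 (hopfA f R z (\<i> * X) v) qi)"

definition A01 :: "(complex \<Rightarrow> quat) \<Rightarrow> (complex \<Rightarrow> quat) \<Rightarrow> complex \<Rightarrow> complex \<Rightarrow> quat \<times> quat \<Rightarrow> quat \<times> quat" where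
  "A01 f R z X v = (1/2) *\<^sub>R (hopfA f R z X v + rmul2 (hopfA f R z (\<i> * X) v) qi)"

text \<open>d^S_lambda phi (X) at z; complex scalars act via the complex structure I (right mult.).\<close>
definition dS :: "(complex \<Rightarrow> quat) \<Rightarrow> (complex \<Rightarrow> quat) \<Rightarrow> complex \<Rightarrow> (complex \<Rightarrow> quat \<times> quat) \<Rightarrow> complex \<Rightarrow> complex \<Rightarrow> quat \<times> quat" where
  "dS f R lam \<phi> z X =
     D \<phi> z X + rmul2 (A10 f R z X (\<phi> z)) (qc (lam - 1))
              + rmul2 (A01 f R z X (\<phi> z)) (qc (inverse lam - 1))"

definition dS_parallel :: "(complex \<Rightarrow> quat) \<Rightarrow> (complex \<Rightarrow> quat) \<Rightarrow> complex \<Rightarrow> (complex \<Rightarrow> quat \<times> quat) \<Rightarrow> complex set \<Rightarrow> bool" where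
  "dS_parallel f R lam \<phi> U = ((\<forall>z\<in>U. \<phi> differentiable (at z)) \<and> (\<forall>z\<in>U. \<forall>X. dS f R lam \<phi> z X = 0))"

end

theory Submission
  imports Defs "HOL-Complex_Analysis.Riemann_Mapping"
begin

text \<open>Write \<phi> = (p, q). The connection form of d^S_\<mu> only sees q, and d^S_\<mu> \<phi> = 0 says
  dq = -(second component of the connection form) and dp = f dq. Since R^2 = -1 and
  1 + c^2 \<noteq> 0 for c = i(1+\<mu>)/(1-\<mu>), every q can be written uniquely as q = R m + m c. Minimality
  (f_xx + f_yy = 0 together with f_xy = f_yx) gives *dR = dR R, and with it the connection form on
  such a q is -(f dR m, dR m). Parallelity thus reduces to R dm + dm c = 0, i.e. m is constant.
  If m = 0 then \<phi> = (n, 0) is constant; otherwise dp = f dR m = d(f R m - f^* m) for a conjugate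
  surface f^*, which exists on a simply connected domain because *df is closed, and the remaining
  constant of integration is absorbed into f^*. The converse is the same computation read backwards.\<close>

section \<open>Quaternion algebra\<close>

lemma qmul_assoc: "qmul (qmul a b) c = qmul a (qmul b c)"
  by (simp add: qmul_def algebra_simps)

lemma qmul_add_left: "qmul (a + b) c = qmul a c + qmul b c"
  and qmul_add_right: "qmul a (b + c) = qmul a b + qmul a c"
  and qmul_diff_left: "qmul (a - b) c = qmul a c - qmul b c"
  and qmul_diff_right: "qmul a (b - c) = qmul a b - qmul a c"
  and qmul_minus_left: "qmul (- a) c = - qmul a c"
  and qmul_minus_right: "qmul a (- c) = - qmul a c"
  and qmul_scaleR_left: "qmul (r *\<^sub>R a) c = r *\<^sub>R qmul a c"
  and qmul_scaleR_right: "qmul a (r *\<^sub>R c) = r *\<^sub>R qmul a c"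
  and qmul_zero_left: "qmul 0 c = 0"
  and qmul_zero_right: "qmul a 0 = 0"
  by (simp_all add: qmul_def algebra_simps scaleR_conv_of_real zero_prod_def)

lemmas qmul_distribs = qmul_add_left qmul_add_right qmul_diff_left qmul_diff_right
  qmul_minus_left qmul_minus_right qmul_scaleR_left qmul_scaleR_right

lemma qc_mult: "qmul (qc a) (qc b) = qc (a * b)"
  and qc_add: "qc a + qc b = qc (a + b)"
  and qc_diff: "qc a - qc b = qc (a - b)"
  and qc_minus: "- qc a = qc (- a)"
  and qc_scaleR: "r *\<^sub>R qc a = qc (of_real r * a)"
  and qc_zero: "qc 0 = 0"
  and qmul_qc_one_left: "qmul (qc 1) x = x"
  and qmul_qc_one_right: "qmul x (qc 1) = x"
  by (simp_all add: qc_def qmul_def scaleR_conv_of_real zero_prod_def)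

lemma bounded_bilinear_qmul: "bounded_bilinear qmul"
  by (rule bilinear_conv_bounded_bilinear[THEN iffD1])
     (simp add: bilinear_def linear_iff qmul_distribs)

definition qinv :: "quat \<Rightarrow> quat" where
  "qinv q = inverse (inner q q) *\<^sub>R (cnj (fst q), - snd q)"

lemma qmul_conj_self: "qmul (cnj (fst q), - snd q) q = inner q q *\<^sub>R qc 1"
  by (cases q) (simp add: qmul_def qc_def inner_Pair complex_eq_iff inner_complex_def power2_eq_square)

lemma qinv_left: "q \<noteq> 0 \<Longrightarrow> qmul (qinv q) q = qc 1"
  unfolding qinv_def qmul_scaleR_left qmul_conj_self by simp

lemma qmul_cancel_left: "a \<noteq> 0 \<Longrightarrow> qmul a x = qmul a y \<Longrightarrow> x = y"
  by (metis qinv_left qmul_assoc qmul_qc_one_left)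

text \<open>Identities between quaternions of the form R m x + m y (x, y complex) reduce to identities
  between their complex coefficients, since left multiplication by R preserves this form when
  R^2 = -1.\<close>

definition qspan :: "quat \<Rightarrow> quat \<Rightarrow> complex \<Rightarrow> complex \<Rightarrow> quat" where
  "qspan R m x y = qmul R (qmul m (qc x)) + qmul m (qc y)"

lemma qspan_add: "qspan R m x y + qspan R m x' y' = qspan R m (x + x') (y + y')"
  and qspan_diff: "qspan R m x y - qspan R m x' y' = qspan R m (x - x') (y - y')"
  and qspan_minus: "- qspan R m x y = qspan R m (- x) (- y)"
  and qspan_scaleR: "r *\<^sub>R qspan R m x y = qspan R m (of_real r * x) (of_real r * y)"
  and qspan_qmul_qc: "qmul (qspan R m x y) (qc w) = qspan R m (x * w) (y * w)"
  by (simp_all add: qspan_def qmul_distribs qmul_assoc qc_mult flip: qc_add qc_diff qc_minus qc_scaleR)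
     (simp_all add: algebra_simps)

lemma qspan_basis: "qspan R m 0 1 = m" "qspan R m 1 0 = qmul R m" "qspan R m 0 c = qmul m (qc c)"
  by (simp_all add: qspan_def qc_zero qmul_zero_right qmul_qc_one_right)

lemma qmul_qspan:
  assumes "qmul R R = - qc 1"
  shows "qmul R (qspan R m x y) = qspan R m y (- x)"
  using assms by (simp add: qspan_def qmul_distribs qmul_qc_one_left flip: qmul_assoc qc_minus)

definition twist_inv :: "quat \<Rightarrow> complex \<Rightarrow> quat \<Rightarrow> quat" where
  "twist_inv R c s = - qmul (qmul R s - qmul s (qc c)) (qc (inverse (1 + c * c)))"

lemma twist_inv_right:
  assumes "qmul R R = - qc 1" "1 + c * c \<noteq> 0"
  shows "qmul R (twist_inv R c s) + qmul (twist_inv R c s) (qc c) = s"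
proof -
  have "twist_inv R c s = qspan R s (- inverse (1 + c * c)) (c * inverse (1 + c * c))"
    unfolding twist_inv_def
    by (simp only: qspan_basis(2,3)[of R s, symmetric] qspan_diff qspan_minus qspan_qmul_qc) simp
  then show ?thesis
    using assms
    by (simp only: qmul_qspan qspan_qmul_qc qspan_add) (simp add: field_simps qspan_basis(1)[of R s])
qed

lemma twist_inv_left:
  assumes "qmul R R = - qc 1" "1 + c * c \<noteq> 0"
  shows "twist_inv R c (qmul R x + qmul x (qc c)) = x"
proof -
  have "qmul R x + qmul x (qc c) = qspan R x 1 c"
    by (simp only: qspan_basis(2,3)[of R x, symmetric] qspan_add) simp
  moreover have "twist_inv R c (qspan R x 1 c) = qspan R x 0 1"
    using assms unfolding twist_inv_def
    by (simp only: qmul_qspan qspan_qmul_qc qspan_diff qspan_minus)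
       (rule arg_cong2[where f = "qspan R x"]; simp add: field_simps)
  ultimately show ?thesis
    by (simp add: qspan_basis(1))
qed

lemma twist_eq_zero_iff:
  assumes "qmul R R = - qc 1" "1 + c * c \<noteq> 0"
  shows "qmul R x + qmul x (qc c) = 0 \<longleftrightarrow> x = 0"
  using twist_inv_left[OF assms, of x]
  by (auto simp: twist_inv_def qmul_zero_left qmul_zero_right)

definition cayley :: "complex \<Rightarrow> complex" where
  "cayley lam = \<i> * (1 + lam) / (1 - lam)"

lemma cayley_square_plus_one_neq_zero:
  assumes "lam \<noteq> 0" "lam \<noteq> 1"
  shows "1 + cayley lam * cayley lam \<noteq> 0"
proof -
  have "(1 + cayley lam * cayley lam) * (1 - lam)\<^sup>2 = (1 - lam)\<^sup>2 + (cayley lam * (1 - lam))\<^sup>2"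
    by (simp add: algebra_simps power2_eq_square)
  also have "cayley lam * (1 - lam) = \<i> * (1 + lam)"
    using assms by (simp add: cayley_def)
  also have "(1 - lam)\<^sup>2 + (\<i> * (1 + lam))\<^sup>2 = - 4 * lam"
    by (simp add: algebra_simps power2_eq_square)
  finally show ?thesis
    using assms by auto
qed

lemma cayley_coefficients:
  assumes "lam \<noteq> 0" "lam \<noteq> 1"
  shows "(cayley lam + \<i>) * (lam - 1) + (cayley lam - \<i>) * (inverse lam - 1) = 0"
    and "(cayley lam * \<i> - 1) * (lam - 1) + (- 1 - cayley lam * \<i>) * (inverse lam - 1) = 4"
proof -
  have ne: "1 - lam \<noteq> 0"
    using assms by simp
  have "(cayley lam + \<i>) * (lam - 1) = - 2 * \<i>" "(cayley lam - \<i>) * (inverse lam - 1) = 2 * \<i>"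
    "(cayley lam * \<i> - 1) * (lam - 1) = 2" "(- 1 - cayley lam * \<i>) * (inverse lam - 1) = 2"
    using ne assms by (simp_all add: cayley_def field_simps)
  then show "(cayley lam + \<i>) * (lam - 1) + (cayley lam - \<i>) * (inverse lam - 1) = 0"
    and "(cayley lam * \<i> - 1) * (lam - 1) + (- 1 - cayley lam * \<i>) * (inverse lam - 1) = 4"
    by simp_all
qed

text \<open>This identity is the only place where the choice c = i(1+\<lambda>)/(1-\<lambda>) enters.\<close>

lemma cayley_twist_identity:
  assumes RR: "qmul R R = - qc 1" and lam: "lam \<noteq> 0" "lam \<noteq> 1"
    and v: "v = qmul R m + qmul m (qc (cayley lam))"
  shows "qmul (qmul R v + qmul v qi) (qc (lam - 1)) + qmul (qmul R v - qmul v qi) (qc (inverse lam - 1))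
    = 4 *\<^sub>R m"
proof -
  have "v = qspan R m 1 (cayley lam)"
    unfolding v by (simp only: qspan_basis(2,3)[of R m, symmetric] qspan_add) simp
  moreover have "4 *\<^sub>R m = qspan R m 0 4"
    using qspan_scaleR[of 4 R m 0 1] by (simp add: qspan_basis(1))
  ultimately show ?thesis
    using RR unfolding qi_def
    by (simp only: qmul_qspan qspan_qmul_qc qspan_add qspan_diff)
       (rule arg_cong2[where f = "qspan R m"]; simp add: cayley_coefficients[OF lam])
qed

section \<open>Derivatives of functions on the complex plane\<close>

lemma D_has_derivative: "F differentiable (at z) \<Longrightarrow> (F has_derivative D F z) (at z)"
  unfolding D_def using frechet_derivative_works by blast

lemma D_eq: "(F has_derivative F') (at z) \<Longrightarrow> D F z = F'"
  unfolding D_def by (rule frechet_derivative_at[symmetric])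

lemma D_linear: "F differentiable (at z) \<Longrightarrow> linear (D F z)"
  using D_has_derivative has_derivative_linear by blast

lemma D_scaleR: "F differentiable (at z) \<Longrightarrow> D F z (r *\<^sub>R X) = r *\<^sub>R D F z X"
  using D_linear linear_scale by blast

lemma D_Re_Im: "F differentiable (at z) \<Longrightarrow> D F z X = Re X *\<^sub>R D F z 1 + Im X *\<^sub>R D F z \<i>"
proof -
  assume F: "F differentiable (at z)"
  have "X = Re X *\<^sub>R 1 + Im X *\<^sub>R \<i>"
    by (simp add: complex_eq_iff)
  then have "D F z X = D F z (Re X *\<^sub>R 1 + Im X *\<^sub>R \<i>)"
    by (rule arg_cong)
  also have "\<dots> = Re X *\<^sub>R D F z 1 + Im X *\<^sub>R D F z \<i>"
    using D_linear[OF F] by (simp add: linear_add linear_scale)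
  finally show ?thesis .
qed

lemma D_const: "D (\<lambda>w. c) z = (\<lambda>X. 0)"
  by (rule D_eq) (rule has_derivative_const)

lemma D_cong_open:
  assumes "open U" "z \<in> U" "\<And>w. w \<in> U \<Longrightarrow> F w = G w" "G differentiable (at z)"
  shows "F differentiable (at z)" "D F z = D G z"
proof -
  have "(F has_derivative D G z) (at z)"
    using has_derivative_transform_within_open[OF D_has_derivative[OF assms(4)] assms(1,2)] assms(3)
    by metis
  then show "F differentiable (at z)" "D F z = D G z"
    using differentiableI D_eq by blast+
qed

lemma constant_on_connected_if_D_zero:
  assumes "open U" "connected U"
    and "\<And>z. z \<in> U \<Longrightarrow> F differentiable (at z) \<and> D F z = (\<lambda>X. 0)"
    and "z \<in> U" "w \<in> U"
  shows "F w = F z"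
proof (rule has_derivative_zero_unique_connected[OF assms(1,2) _ assms(5,4)])
  fix x
  assume "x \<in> U"
  then show "(F has_derivative (\<lambda>X. 0)) (at x)"
    using D_has_derivative[of F x] assms(3) by simp
qed

lemma has_derivative_qmul:
  "(F has_derivative F') (at z) \<Longrightarrow> (G has_derivative G') (at z) \<Longrightarrow>
    ((\<lambda>w. qmul (F w) (G w)) has_derivative (\<lambda>X. qmul (F' X) (G z) + qmul (F z) (G' X))) (at z)"
  using bounded_bilinear.FDERIV[OF bounded_bilinear_qmul] by (simp add: add.commute)

lemma differentiable_qmul:
  fixes F G :: "complex \<Rightarrow> quat"
  assumes "F differentiable (at z)" "G differentiable (at z)"
  shows "(\<lambda>w. qmul (F w) (G w)) differentiable (at z)"
  using has_derivative_qmul[OF D_has_derivative[OF assms(1)] D_has_derivative[OF assms(2)]]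
  by (rule differentiableI)

lemma has_derivative_twist:
  "(R has_derivative R') (at z) \<Longrightarrow> (m has_derivative m') (at z) \<Longrightarrow>
    ((\<lambda>w. qmul (R w) (m w) + qmul (m w) (qc c)) has_derivative
      (\<lambda>X. qmul (R' X) (m z) + (qmul (R z) (m' X) + qmul (m' X) (qc c)))) (at z)"
  by (rule has_derivative_eq_rhs[OF has_derivative_add[OF has_derivative_qmul
        has_derivative_qmul[OF _ has_derivative_const]]]) (simp_all add: qmul_zero_right add.assoc)

lemma differentiable_qinv: "q \<noteq> 0 \<Longrightarrow> qinv differentiable (at q)"
  unfolding qinv_def[abs_def]
  by (rule differentiableI) (auto intro!: derivative_eq_intros bounded_linear.has_derivative[OF bounded_linear_cnj])

lemma has_vector_derivative_along_line:
  assumes "H differentiable (at (a + of_real s * b))"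
  shows "((\<lambda>s. H (a + of_real s * b)) has_vector_derivative D H (a + of_real s * b) b) (at s)"
proof -
  have "((\<lambda>s. a + of_real s * b) has_derivative (\<lambda>ds. of_real ds * b)) (at s)"
    by (auto intro!: derivative_eq_intros)
  from has_derivative_compose[OF this D_has_derivative[OF assms]]
  show ?thesis
    using D_scaleR[OF assms] by (simp add: has_vector_derivative_def scaleR_conv_of_real)
qed

lemma increment_bound:
  fixes g :: "real \<Rightarrow> 'a::real_normed_vector"
  assumes "a \<le> b"
    and g: "\<And>x. x \<in> {a..b} \<Longrightarrow> (g has_vector_derivative g' x) (at x)"
    and bound: "\<And>x. x \<in> {a..b} \<Longrightarrow> norm (g' x - L) \<le> e"
  shows "norm (g b - g a - (b - a) *\<^sub>R L) \<le> e * (b - a)"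
proof -
  have "norm ((g b - b *\<^sub>R L) - (g a - a *\<^sub>R L)) \<le> e * norm (b - a)"
  proof (rule differentiable_bound[where f' = "\<lambda>x h. h *\<^sub>R (g' x - L)"])
    fix x
    assume x: "x \<in> {a..b}"
    show "((\<lambda>x. g x - x *\<^sub>R L) has_derivative (\<lambda>h. h *\<^sub>R (g' x - L))) (at x within {a..b})"
    proof (rule has_derivative_eq_rhs[OF has_derivative_diff])
      show "(g has_derivative (\<lambda>h. h *\<^sub>R g' x)) (at x within {a..b})"
        using g[OF x] by (simp add: has_vector_derivative_def has_derivative_at_withinI)
      show "((\<lambda>x. x *\<^sub>R L) has_derivative (\<lambda>h. h *\<^sub>R L)) (at x within {a..b})"
        by (rule has_derivative_scaleR_left[OF has_derivative_ident])
    qed (simp add: algebra_simps)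
    show "onorm (\<lambda>h. h *\<^sub>R (g' x - L)) \<le> e"
      using onorm_scaleR_left[OF bounded_linear_ident, of "g' x - L"] bound[OF x] by (simp add: onorm_id)
  qed (use assms(1) in auto)
  then show ?thesis
    using assms(1) by (simp add: algebra_simps)
qed

lemma second_difference_bound:
  fixes F :: "complex \<Rightarrow> 'a::real_normed_vector"
  assumes "t \<ge> 0" "t * (norm u + norm v) < d"
    and F: "\<And>w. w \<in> ball z d \<Longrightarrow> F differentiable (at w) \<and> (\<lambda>w. D F w u) differentiable (at w) \<and>
      norm (D (\<lambda>w. D F w u) w v - L) \<le> e"
  shows "norm (F (z + of_real t * u + of_real t * v) - F (z + of_real t * u) - F (z + of_real t * v) + F z
    - (t * t) *\<^sub>R L) \<le> e * (t * t)"
proof -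
  define p where "p x y = z + of_real x * u + of_real y * v" for x y
  have near: "p x y \<in> ball z d" if "x \<in> {0..t}" "y \<in> {0..t}" for x y
  proof -
    have "norm (of_real x * u + of_real y * v) \<le> x * norm u + y * norm v"
      using that norm_triangle_ineq[of "of_real x * u" "of_real y * v"] by (simp add: norm_mult)
    also have "\<dots> \<le> t * (norm u + norm v)"
      using that by (simp add: distrib_left add_mono mult_right_mono)
    finally show ?thesis
      using assms(2) by (simp add: p_def dist_norm norm_minus_commute add.commute)
  qed
  have along_u: "((\<lambda>x. F (p x y)) has_vector_derivative D F (p x y) u) (at x)"
    if "x \<in> {0..t}" "y \<in> {0..t}" for x y
    using has_vector_derivative_along_line[of F "z + of_real y * v" x u] F[OF near[OF that]]
    by (simp add: p_def algebra_simps)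
  have along_v: "((\<lambda>y. D F (p x y) u) has_vector_derivative D (\<lambda>w. D F w u) (p x y) v) (at y)"
    if "x \<in> {0..t}" "y \<in> {0..t}" for x y
    using has_vector_derivative_along_line[of "\<lambda>w. D F w u" "z + of_real x * u" y v] F[OF near[OF that]]
    by (simp add: p_def)
  have "norm (D F (p x t) u - D F (p x 0) u - t *\<^sub>R L) \<le> e * t" if "x \<in> {0..t}" for x
    using increment_bound[OF \<open>t \<ge> 0\<close>, where g = "\<lambda>y. D F (p x y) u"
        and g' = "\<lambda>y. D (\<lambda>w. D F w u) (p x y) v"] along_v F near that
    by simp
  then have "norm ((F (p t t) - F (p t 0)) - (F (p 0 t) - F (p 0 0)) - t *\<^sub>R t *\<^sub>R L) \<le> e * t * t"
    using increment_bound[OF \<open>t \<ge> 0\<close>, where g = "\<lambda>x. F (p x t) - F (p x 0)"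
        and g' = "\<lambda>x. D F (p x t) u - D F (p x 0) u" and L = "t *\<^sub>R L" and e = "e * t"]
      along_u \<open>t \<ge> 0\<close>
    by (simp add: has_vector_derivative_diff)
  then show ?thesis
    by (simp add: p_def algebra_simps)
qed

text \<open>Both mixed derivatives are limits of the same second difference quotient divided by t^2.\<close>

lemma D_second_symmetric:
  fixes F :: "complex \<Rightarrow> 'a::real_normed_vector"
  assumes "open U" "z \<in> U"
    and dF: "\<And>w. w \<in> U \<Longrightarrow> F differentiable (at w) \<and>
      (\<lambda>w. D F w u) differentiable (at w) \<and> (\<lambda>w. D F w v) differentiable (at w)"
    and cont_uv: "continuous_on U (\<lambda>w. D (\<lambda>w. D F w u) w v)"
    and cont_vu: "continuous_on U (\<lambda>w. D (\<lambda>w. D F w v) w u)"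
  shows "D (\<lambda>w. D F w u) z v = D (\<lambda>w. D F w v) z u"
proof -
  define L1 L2 where "L1 = D (\<lambda>w. D F w u) z v" and "L2 = D (\<lambda>w. D F w v) z u"
  have "norm (L1 - L2) \<le> 2 * e" if "e > 0" for e
  proof -
    obtain d0 where "d0 > 0" "ball z d0 \<subseteq> U"
      using assms(1,2) openE by blast
    moreover obtain d1 where "d1 > 0"
      "\<And>w. w \<in> U \<Longrightarrow> dist w z < d1 \<Longrightarrow> dist (D (\<lambda>w. D F w u) w v) L1 < e"
      using cont_uv assms(2) \<open>e > 0\<close> unfolding continuous_on_iff L1_def by metis
    moreover obtain d2 where "d2 > 0"
      "\<And>w. w \<in> U \<Longrightarrow> dist w z < d2 \<Longrightarrow> dist (D (\<lambda>w. D F w v) w u) L2 < e"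
      using cont_vu assms(2) \<open>e > 0\<close> unfolding continuous_on_iff L2_def by metis
    ultimately obtain d where "d > 0" and close: "\<And>w. w \<in> ball z d \<Longrightarrow>
      F differentiable (at w) \<and> (\<lambda>w. D F w u) differentiable (at w) \<and> (\<lambda>w. D F w v) differentiable (at w) \<and>
      dist (D (\<lambda>w. D F w u) w v) L1 \<le> e \<and> dist (D (\<lambda>w. D F w v) w u) L2 \<le> e"
      using dF by (intro that[of "min d0 (min d1 d2)"]) (auto simp: dist_commute subset_iff less_imp_le)
    define t where "t = d / (norm u + norm v + 1)"
    have t: "t > 0" "t * (norm u + norm v) < d"
      using \<open>d > 0\<close> by (simp_all add: t_def add_nonneg_pos pos_divide_less_eq)
    define \<Delta> where "\<Delta> = F (z + of_real t * u + of_real t * v) - F (z + of_real t * u)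
      - F (z + of_real t * v) + F z"
    have "norm (\<Delta> - (t * t) *\<^sub>R L1) \<le> e * (t * t)"
      unfolding \<Delta>_def using t close by (intro second_difference_bound) (auto simp: dist_norm)
    moreover have "norm (\<Delta> - (t * t) *\<^sub>R L2) \<le> e * (t * t)"
      using second_difference_bound[of t v u d z F L2 e] t close
      by (simp add: \<Delta>_def dist_norm algebra_simps)
    moreover have "(t * t) * norm (L1 - L2) = norm ((\<Delta> - (t * t) *\<^sub>R L2) - (\<Delta> - (t * t) *\<^sub>R L1))"
      by (simp add: scaleR_diff_right flip: scaleR_diff_right)
    moreover have "\<dots> \<le> norm (\<Delta> - (t * t) *\<^sub>R L2) + norm (\<Delta> - (t * t) *\<^sub>R L1)"
      by (rule norm_triangle_ineq4)
    ultimately have "(t * t) * norm (L1 - L2) \<le> 2 * (e * (t * t))"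
      by linarith
    then show ?thesis
      using t by (simp add: algebra_simps)
  qed
  have "norm (L1 - L2) \<le> 0"
  proof (rule field_le_epsilon)
    fix e :: real
    assume "e > 0"
    then show "norm (L1 - L2) \<le> 0 + e"
      using \<open>\<And>e. e > 0 \<Longrightarrow> norm (L1 - L2) \<le> 2 * e\<close>[of "e / 2"] by simp
  qed
  then show ?thesis
    by (simp add: L1_def L2_def)
qed

section \<open>Minimal immersions\<close>

lemma C2_onD:
  assumes "Ck_on 2 F U"
  shows "\<And>z. z \<in> U \<Longrightarrow> F differentiable (at z)"
    and "\<And>z X. z \<in> U \<Longrightarrow> (\<lambda>w. D F w X) differentiable (at z)"
    and "\<And>X Y. continuous_on U (\<lambda>w. D (\<lambda>w. D F w X) w Y)"
  using assms by (simp_all add: numeral_2_eq_2)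

locale minimal_immersion =
  fixes f R :: "complex \<Rightarrow> quat" and U :: "complex set"
  assumes open_U: "open U"
    and conformal: "conformal_immersion f U"
    and minimal: "minimal_on f U"
    and normal: "right_normal f R U"
begin

lemma C2: "Ck_on 2 f U"
  using conformal unfolding conformal_immersion_def smooth_on_def by blast

lemmas f_differentiable = C2_onD(1)[OF C2]
  and Df_differentiable = C2_onD(2)[OF C2]
  and DDf_continuous = C2_onD(3)[OF C2]

lemma Df_1_nonzero: "z \<in> U \<Longrightarrow> D f z 1 \<noteq> 0"
  using conformal unfolding conformal_immersion_def by blast

lemma Df_mult_i: "z \<in> U \<Longrightarrow> D f z (\<i> * X) = - qmul (D f z X) (R z)"
  using normal unfolding right_normal_def by blast

lemma R_square: "z \<in> U \<Longrightarrow> qmul (R z) (R z) = - qc 1"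
proof -
  assume z: "z \<in> U"
  have "- D f z 1 = D f z (\<i> * \<i>)"
    using D_scaleR[OF f_differentiable[OF z], of "-1" 1] by simp
  also have "\<dots> = qmul (D f z 1) (qmul (R z) (R z))"
    using Df_mult_i[OF z, of \<i>] Df_mult_i[OF z, of 1] by (simp add: qmul_minus_left qmul_assoc)
  finally have "qmul (D f z 1) (qmul (R z) (R z)) = qmul (D f z 1) (- qc 1)"
    by (simp add: qmul_minus_right qmul_qc_one_right)
  then show ?thesis
    using qmul_cancel_left Df_1_nonzero[OF z] by blast
qed

lemma R_differentiable: "z \<in> U \<Longrightarrow> R differentiable (at z)"
proof -
  assume z: "z \<in> U"
  define g where "g w = - qmul (qinv (D f w 1)) (D f w \<i>)" for w
  have R_eq: "R w = g w" if "w \<in> U" for w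
    using Df_mult_i[OF that, of 1] qinv_left[OF Df_1_nonzero[OF that]]
    by (simp add: g_def qmul_minus_right qmul_qc_one_left flip: qmul_assoc)
  have "(\<lambda>w. qinv (D f w 1)) differentiable (at z)"
    using differentiable_chain_at[OF Df_differentiable[OF z] differentiable_qinv[OF Df_1_nonzero[OF z]]]
    by (simp add: o_def)
  then have "g differentiable (at z)"
    unfolding g_def by (intro differentiable_minus differentiable_qmul Df_differentiable[OF z])
  then show ?thesis
    using D_cong_open(1)[OF open_U z, of R g] R_eq by blast
qed

lemma DDf_symmetric:
  assumes "z \<in> U"
  shows "D (\<lambda>w. D f w 1) z \<i> = D (\<lambda>w. D f w \<i>) z 1"
proof (rule D_second_symmetric[OF open_U assms])
  fix w
  assume "w \<in> U"
  then show "f differentiable (at w) \<and> (\<lambda>w. D f w 1) differentiable (at w) \<and>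
    (\<lambda>w. D f w \<i>) differentiable (at w)"
    by (simp add: f_differentiable Df_differentiable)
qed (rule DDf_continuous)+

lemma DDf_harmonic: "z \<in> U \<Longrightarrow> D (\<lambda>w. D f w 1) z 1 + D (\<lambda>w. D f w \<i>) z \<i> = 0"
  using minimal unfolding minimal_on_def by blast

text \<open>Differentiating f_y = - f_x R and using f_xx + f_yy = 0 and f_xy = f_yx gives R_y = R_x R.\<close>

lemma DR_i: "z \<in> U \<Longrightarrow> D R z \<i> = qmul (D R z 1) (R z)"
proof -
  assume z: "z \<in> U"
  define fx fxx fxy fyy where "fx = D f z 1" and "fxx = D (\<lambda>w. D f w 1) z 1"
    and "fxy = D (\<lambda>w. D f w 1) z \<i>" and "fyy = D (\<lambda>w. D f w \<i>) z \<i>"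
  have fy: "D (\<lambda>w. D f w \<i>) z Y = - (qmul (D (\<lambda>w. D f w 1) z Y) (R z) + qmul fx (D R z Y))" for Y
  proof -
    have "D (\<lambda>w. D f w \<i>) z = D (\<lambda>w. - qmul (D f w 1) (R w)) z"
      using D_cong_open(2)[OF open_U z, of "\<lambda>w. D f w \<i>" "\<lambda>w. - qmul (D f w 1) (R w)"]
        Df_mult_i[of _ 1] differentiable_minus[OF differentiable_qmul[OF Df_differentiable[OF z]
          R_differentiable[OF z]]]
      by simp
    also have "\<dots> = (\<lambda>Y. - (qmul (D (\<lambda>w. D f w 1) z Y) (R z) + qmul fx (D R z Y)))"
      unfolding fx_def
      by (rule D_eq, rule has_derivative_minus, rule has_derivative_qmul)
         (auto intro: D_has_derivative Df_differentiable[OF z] R_differentiable[OF z])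
    finally show ?thesis
      by simp
  qed
  have "fxx = - fyy"
    using DDf_harmonic[OF z] by (simp add: fxx_def fyy_def eq_neg_iff_add_eq_0)
  also have "\<dots> = qmul fxy (R z) + qmul fx (D R z \<i>)"
    using fy[of \<i>] by (simp add: fyy_def fxy_def)
  also have "fxy = - (qmul fxx (R z) + qmul fx (D R z 1))"
    using fy[of 1] DDf_symmetric[OF z] by (simp add: fxx_def fxy_def)
  finally have "qmul fx (D R z \<i>) = qmul fx (qmul (D R z 1) (R z))"
    using R_square[OF z]
    by (simp add: qmul_distribs qmul_assoc qmul_qc_one_right algebra_simps)
  then show ?thesis
    using qmul_cancel_left Df_1_nonzero[OF z] unfolding fx_def by blast
qed

lemma DR_mult_i: "z \<in> U \<Longrightarrow> D R z (\<i> * X) = qmul (D R z X) (R z)"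
  using R_square
  by (simp add: D_Re_Im[OF R_differentiable, of z "\<i> * X"] D_Re_Im[OF R_differentiable, of z X]
      DR_i qmul_distribs qmul_assoc qmul_qc_one_right)

text \<open>The real part of a primitive of this holomorphic function is the e-component of a
  conjugate surface; the Cauchy-Riemann equations are harmonicity and the symmetry of f_xy.\<close>

definition conj_deriv :: "quat \<Rightarrow> complex \<Rightarrow> complex" where
  "conj_deriv e w = of_real (- inner (D f w \<i>) e) - \<i> * of_real (inner (D f w 1) e)"

lemma conj_deriv_has_field_derivative:
  assumes z: "z \<in> U"
  shows "(conj_deriv e has_field_derivative
    of_real (- inner (D (\<lambda>w. D f w \<i>) z 1) e) - \<i> * of_real (inner (D (\<lambda>w. D f w 1) z 1) e)) (at z)"
proof -
  define fxx fxy where "fxx = D (\<lambda>w. D f w 1) z 1" and "fxy = D (\<lambda>w. D f w \<i>) z 1"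
  have fx: "D (\<lambda>w. D f w 1) z X = Re X *\<^sub>R fxx + Im X *\<^sub>R fxy" for X
    using D_Re_Im[OF Df_differentiable[OF z], of 1 X] DDf_symmetric[OF z] by (simp add: fxx_def fxy_def)
  have fy: "D (\<lambda>w. D f w \<i>) z X = Re X *\<^sub>R fxy - Im X *\<^sub>R fxx" for X
    using D_Re_Im[OF Df_differentiable[OF z], of \<i> X] DDf_harmonic[OF z]
    by (simp add: fxx_def fxy_def eq_neg_iff_add_eq_0[symmetric])
  have "(conj_deriv e has_derivative (\<lambda>X. of_real (- inner (D (\<lambda>w. D f w \<i>) z X) e)
      - \<i> * of_real (inner (D (\<lambda>w. D f w 1) z X) e))) (at z)"
    unfolding conj_deriv_def[abs_def]
    by (rule derivative_eq_intros D_has_derivative Df_differentiable z refl)+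
  moreover have "(\<lambda>X. of_real (- inner (D (\<lambda>w. D f w \<i>) z X) e) - \<i> * of_real (inner (D (\<lambda>w. D f w 1) z X) e))
      = (*) (of_real (- inner fxy e) - \<i> * of_real (inner fxx e))"
    by (rule ext) (simp add: fx fy inner_diff_left inner_add_left complex_eq_iff algebra_simps)
  ultimately show ?thesis
    by (simp add: has_field_derivative_def fxx_def fxy_def)
qed

lemma conjugate_surface_exists:
  assumes "simply_connected U"
  shows "\<exists>fs. conjugate_surface f fs U"
proof -
  have "conj_deriv e holomorphic_on U" for e
    unfolding holomorphic_on_def field_differentiable_def
    using conj_deriv_has_field_derivative has_field_derivative_at_within by blast
  then have "\<forall>e. \<exists>H. \<forall>z\<in>U. (H has_field_derivative conj_deriv e z) (at z)"
    using simply_connected_eq_global_primitive[OF open_U] assms by blast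
  then obtain H where H: "\<And>e z. z \<in> U \<Longrightarrow> (H e has_field_derivative conj_deriv e z) (at z)"
    by metis
  define fs where "fs w = (\<Sum>e\<in>Basis. Re (H e w) *\<^sub>R e)" for w
  have fs_der: "(fs has_derivative (\<lambda>X. - D f z (\<i> * X))) (at z)" if z: "z \<in> U" for z
  proof -
    have "(fs has_derivative (\<lambda>X. \<Sum>e\<in>Basis. Re (conj_deriv e z * X) *\<^sub>R e)) (at z)"
      unfolding fs_def[abs_def] using H[OF z]
      by (intro has_derivative_sum) (auto simp: has_field_derivative_def
          intro!: derivative_eq_intros bounded_linear.has_derivative[OF bounded_linear_Re])
    moreover have "Re (conj_deriv e z * X) = inner (- D f z (\<i> * X)) e" for e X
    proof -
      have Df: "D f z (\<i> * X) = Re X *\<^sub>R D f z \<i> - Im X *\<^sub>R D f z 1"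
        using D_Re_Im[OF f_differentiable[OF z], of "\<i> * X"] by simp
      show ?thesis
        by (simp only: Df) (simp add: conj_deriv_def inner_diff_left algebra_simps)
    qed
    ultimately show ?thesis
      by (simp add: sum_negf euclidean_representation)
  qed
  have "conjugate_surface f fs U"
    unfolding conjugate_surface_def
  proof (intro conjI ballI allI)
    fix z X
    assume "z \<in> U"
    show "fs differentiable (at z)"
      using fs_der[OF \<open>z \<in> U\<close>] by (rule differentiableI)
    show "D fs z X = - D f z (\<i> * X)"
      using D_eq[OF fs_der[OF \<open>z \<in> U\<close>]] by simp
  qed
  then show ?thesis
    by blast
qed

lemma D_conjugate_surface: "conjugate_surface f fs U \<Longrightarrow> z \<in> U \<Longrightarrow> D fs z X = qmul (D f z X) (R z)"
  by (simp add: conjugate_surface_def Df_mult_i)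

end

section \<open>Parallel sections\<close>

definition conn_form :: "(complex \<Rightarrow> quat) \<Rightarrow> (complex \<Rightarrow> quat) \<Rightarrow> complex \<Rightarrow> complex \<Rightarrow> complex \<Rightarrow>
    quat \<times> quat \<Rightarrow> quat \<times> quat" where
  "conn_form f R lam z X v =
     rmul2 (A10 f R z X v) (qc (lam - 1)) + rmul2 (A01 f R z X v) (qc (inverse lam - 1))"

lemma dS_eq_conn_form: "dS f R lam \<phi> z X = D \<phi> z X + conn_form f R lam z X (\<phi> z)"
  by (simp add: dS_def conn_form_def add.assoc)

lemma fst_conn_form: "fst (conn_form f R lam z X v) = qmul (f z) (snd (conn_form f R lam z X v))"
  by (simp add: conn_form_def A10_def A01_def hopfA_def starA_def rmul2_def qmul_assoc qmul_distribs)

lemma conn_form_snd_zero: "snd v = 0 \<Longrightarrow> conn_form f R lam z X v = 0"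
  by (simp add: conn_form_def A10_def A01_def hopfA_def starA_def rmul2_def qmul_zero_left qmul_zero_right
      flip: zero_prod_def)

text \<open>The section e \<alpha> + \<psi> \<beta> of the statement, with \<alpha> + f \<beta> simplified to f R m - f^* m.\<close>

definition twisted_section :: "(complex \<Rightarrow> quat) \<Rightarrow> (complex \<Rightarrow> quat) \<Rightarrow> (complex \<Rightarrow> quat) \<Rightarrow> complex \<Rightarrow>
    quat \<Rightarrow> complex \<Rightarrow> quat \<times> quat" where
  "twisted_section f R fs lam m w =
     (qmul (f w) (qmul (R w) m) - qmul (fs w) m, qmul (R w) m + qmul m (qc (cayley lam)))"

lemma twisted_section_shift:
  "twisted_section f R (\<lambda>w. fs w - c) lam m w = twisted_section f R fs lam m w + (qmul c m, 0)"
  by (simp add: twisted_section_def qmul_diff_left)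

lemma twisted_section_zero: "twisted_section f R fs lam 0 w = 0"
  by (simp add: twisted_section_def qmul_zero_left qmul_zero_right flip: zero_prod_def)

lemma twisted_section_let_eq:
  "(let c = qc (\<i> * (1 + lam) / (1 - lam));
        \<alpha> = - qmul (fs z) m - qmul (qmul (f z) m) c;
        \<beta> = qmul (R z) m + qmul m c
    in (\<alpha> + qmul (f z) \<beta>, \<beta>)) = twisted_section f R fs lam m z"
  by (simp add: Let_def twisted_section_def cayley_def qmul_distribs qmul_assoc)

lemma conjugate_surface_shift: "conjugate_surface f fs U \<Longrightarrow> conjugate_surface f (\<lambda>w. fs w - c) U"
  unfolding conjugate_surface_def
  using D_eq[OF has_derivative_diff[OF D_has_derivative has_derivative_const], of fs _ c]
  by auto

lemma D_parallel:
  "dS_parallel f R lam \<phi> U \<Longrightarrow> z \<in> U \<Longrightarrow> D \<phi> z X = - conn_form f R lam z X (\<phi> z)"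
  by (simp add: dS_parallel_def dS_eq_conn_form eq_neg_iff_add_eq_0)

context minimal_immersion
begin

lemma conn_form_twisted:
  assumes z: "z \<in> U" and lam: "lam \<noteq> 0" "lam \<noteq> 1"
    and v: "snd v = qmul (R z) m + qmul m (qc (cayley lam))"
  shows "conn_form f R lam z X v = - (qmul (f z) (qmul (D R z X) m), qmul (D R z X) m)"
proof -
  define P where "P = D R z X"
  have DR1: "D R z (\<i> * X) = qmul P (R z)"
    using DR_mult_i[OF z] by (simp add: P_def)
  have DR2: "D R z (- X) = - P"
    using D_scaleR[OF R_differentiable[OF z], of "-1" X] by (simp add: P_def)
  have "snd (conn_form f R lam z X v) = - (1/4) *\<^sub>R qmul P
      (qmul (qmul (R z) (snd v) + qmul (snd v) qi) (qc (lam - 1))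
       + qmul (qmul (R z) (snd v) - qmul (snd v) qi) (qc (inverse lam - 1)))"
    by (simp add: conn_form_def A10_def A01_def hopfA_def starA_def rmul2_def DR1 DR2 qmul_distribs
        qmul_assoc algebra_simps)
  also have "\<dots> = - qmul P m"
    using cayley_twist_identity[OF R_square[OF z] lam v] by (simp add: qmul_scaleR_right)
  finally show ?thesis
    using fst_conn_form[of f R lam z X v] by (intro prod_eqI) (simp_all add: P_def qmul_minus_right)
qed

lemma has_derivative_twisted_section:
  assumes fs: "conjugate_surface f fs U" and z: "z \<in> U"
  shows "(twisted_section f R fs lam m has_derivative
    (\<lambda>X. (qmul (f z) (qmul (D R z X) m), qmul (D R z X) m))) (at z)"
proof -
  have Rm: "((\<lambda>w. qmul (R w) m) has_derivative (\<lambda>X. qmul (D R z X) m)) (at z)"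
    using has_derivative_qmul[OF D_has_derivative[OF R_differentiable[OF z]] has_derivative_const]
    by (simp add: qmul_zero_right)
  have "fs differentiable (at z)"
    using fs z by (simp add: conjugate_surface_def)
  from has_derivative_qmul[OF D_has_derivative[OF this] has_derivative_const]
  have fsm: "((\<lambda>w. qmul (fs w) m) has_derivative (\<lambda>X. qmul (qmul (D f z X) (R z)) m)) (at z)"
    using D_conjugate_surface[OF fs z] by (simp add: qmul_zero_right)
  have fRm: "((\<lambda>w. qmul (f w) (qmul (R w) m)) has_derivative
      (\<lambda>X. qmul (D f z X) (qmul (R z) m) + qmul (f z) (qmul (D R z X) m))) (at z)"
    by (rule has_derivative_qmul[OF D_has_derivative[OF f_differentiable[OF z]] Rm])
  show ?thesis
    unfolding twisted_section_def[abs_def]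
    by (rule has_derivative_eq_rhs[OF has_derivative_Pair[OF has_derivative_diff[OF fRm fsm]
        has_derivative_add[OF Rm has_derivative_const]]]) (simp add: qmul_assoc)
qed

lemma parallel_const:
  assumes "\<forall>z\<in>U. \<phi> z = (n, 0)"
  shows "dS_parallel f R lam \<phi> U"
  unfolding dS_parallel_def
proof (intro conjI ballI allI)
  fix z X
  assume z: "z \<in> U"
  show "\<phi> differentiable (at z)"
    using D_cong_open(1)[OF open_U z, of \<phi> "\<lambda>_. (n, 0)"] assms by simp
  have "D \<phi> z = (\<lambda>X. 0)"
    using D_cong_open(2)[OF open_U z, of \<phi> "\<lambda>_. (n, 0)"] assms by (simp add: D_const)
  then show "dS f R lam \<phi> z X = 0"
    using assms z by (simp add: dS_eq_conn_form conn_form_snd_zero)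
qed

lemma parallel_twisted:
  assumes fs: "conjugate_surface f fs U" and lam: "lam \<noteq> 0" "lam \<noteq> 1"
    and \<phi>: "\<forall>z\<in>U. \<phi> z = twisted_section f R fs lam m z"
  shows "dS_parallel f R lam \<phi> U"
  unfolding dS_parallel_def
proof (intro conjI ballI allI)
  fix z X
  assume z: "z \<in> U"
  note der = has_derivative_twisted_section[OF fs z, of lam m]
  show "\<phi> differentiable (at z)"
    using D_cong_open(1)[OF open_U z, of \<phi> "twisted_section f R fs lam m"] \<phi> differentiableI[OF der]
    by simp
  have "D \<phi> z X = (qmul (f z) (qmul (D R z X) m), qmul (D R z X) m)"
    using D_cong_open(2)[OF open_U z, of \<phi> "twisted_section f R fs lam m"] \<phi> differentiableI[OF der]
      D_eq[OF der] by simp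
  moreover have "conn_form f R lam z X (\<phi> z) = - (qmul (f z) (qmul (D R z X) m), qmul (D R z X) m)"
    using conn_form_twisted[OF z lam] \<phi> z by (simp add: twisted_section_def)
  ultimately show "dS f R lam \<phi> z X = 0"
    by (simp add: dS_eq_conn_form zero_prod_def)
qed

lemma parallel_snd_twisted:
  assumes "connected U" and lam: "lam \<noteq> 0" "lam \<noteq> 1" and par: "dS_parallel f R lam \<phi> U"
  shows "\<exists>m. \<forall>w\<in>U. snd (\<phi> w) = qmul (R w) m + qmul m (qc (cayley lam))"
proof (cases "U = {}")
  case False
  then obtain z0 where z0: "z0 \<in> U"
    by blast
  define c where "c = cayley lam"
  have c: "1 + c * c \<noteq> 0"
    using cayley_square_plus_one_neq_zero[OF lam] by (simp add: c_def)
  define q where "q w = snd (\<phi> w)" for w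
  define m where "m w = twist_inv (R w) c (q w)" for w
  have q_der: "(q has_derivative (\<lambda>X. snd (D \<phi> z X))) (at z)" if "z \<in> U" for z
    using par that unfolding q_def dS_parallel_def by (auto intro: has_derivative_snd D_has_derivative)
  have m_diff: "m differentiable (at z)" if "z \<in> U" for z
    unfolding m_def[abs_def] twist_inv_def
    using differentiableI[OF q_der[OF that]] R_differentiable[OF that]
    by (intro differentiable_minus differentiable_diff differentiable_qmul differentiable_const)
  have q_eq: "q w = qmul (R w) (m w) + qmul (m w) (qc c)" if "w \<in> U" for w
    unfolding m_def using twist_inv_right[OF R_square[OF that] c] by simp
  have "D m z = (\<lambda>X. 0)" if z: "z \<in> U" for z
  proof
    fix X
    have "(q has_derivative (\<lambda>X. qmul (D R z X) (m z) + (qmul (R z) (D m z X) + qmul (D m z X) (qc c))))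
        (at z)"
      by (rule has_derivative_transform_within_open[OF _ open_U z, OF has_derivative_twist])
         (simp_all add: q_eq D_has_derivative R_differentiable[OF z] m_diff[OF z])
    then have "D q z X = qmul (D R z X) (m z) + (qmul (R z) (D m z X) + qmul (D m z X) (qc c))"
      by (simp add: D_eq)
    then have "snd (D \<phi> z X) = qmul (D R z X) (m z) + (qmul (R z) (D m z X) + qmul (D m z X) (qc c))"
      using D_eq[OF q_der[OF z]] by simp
    moreover have "snd (D \<phi> z X) = qmul (D R z X) (m z)"
      using D_parallel[OF par z, of X] conn_form_twisted[OF z lam, of "\<phi> z" "m z" X] q_eq[OF z]
      by (simp add: q_def c_def)
    ultimately have "qmul (R z) (D m z X) + qmul (D m z X) (qc c) = 0"
      by simp
    then show "D m z X = 0"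
      using twist_eq_zero_iff[OF R_square[OF z] c] by blast
  qed
  then have "m w = m z0" if "w \<in> U" for w
    using constant_on_connected_if_D_zero[OF open_U assms(1) _ z0 that] m_diff by blast
  then show ?thesis
    using q_eq by (intro exI[of _ "m z0"]) (simp add: q_def c_def)
qed simp

lemma parallel_cases:
  assumes "simply_connected U" and lam: "lam \<noteq> 0" "lam \<noteq> 1" and par: "dS_parallel f R lam \<phi> U"
  shows "(\<exists>n. \<forall>z\<in>U. \<phi> z = (n, 0)) \<or>
    (\<exists>m fs. m \<noteq> 0 \<and> conjugate_surface f fs U \<and> (\<forall>z\<in>U. \<phi> z = twisted_section f R fs lam m z))"
proof (cases "U = {}")
  case False
  then obtain z0 where z0: "z0 \<in> U"
    by blast
  have conn: "connected U"
    using assms(1) simply_connected_imp_connected by blast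
  obtain m where m: "\<forall>w\<in>U. snd (\<phi> w) = qmul (R w) m + qmul m (qc (cayley lam))"
    using parallel_snd_twisted[OF conn lam par] by blast
  obtain F where F: "conjugate_surface f F U"
    using conjugate_surface_exists[OF assms(1)] by blast
  define \<psi> where "\<psi> = twisted_section f R F lam m"
  have "\<phi> w - \<psi> w = \<phi> z0 - \<psi> z0" if "w \<in> U" for w
  proof (rule constant_on_connected_if_D_zero[OF open_U conn _ z0 that])
    fix z
    assume z: "z \<in> U"
    have "D \<phi> z X = (qmul (f z) (qmul (D R z X) m), qmul (D R z X) m)" for X
      using D_parallel[OF par z, of X] conn_form_twisted[OF z lam, of "\<phi> z" m X] m z by simp
    moreover have "\<phi> differentiable (at z)"
      using par z by (simp add: dS_parallel_def)
    then have "((\<lambda>w. \<phi> w - \<psi> w) has_derivative (\<lambda>X. D \<phi> z X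
        - (qmul (f z) (qmul (D R z X) m), qmul (D R z X) m))) (at z)"
      unfolding \<psi>_def by (rule has_derivative_diff[OF D_has_derivative has_derivative_twisted_section[OF F z]])
    ultimately have "((\<lambda>w. \<phi> w - \<psi> w) has_derivative (\<lambda>X. 0)) (at z)"
      by simp
    then show "(\<lambda>w. \<phi> w - \<psi> w) differentiable (at z) \<and> D (\<lambda>w. \<phi> w - \<psi> w) z = (\<lambda>X. 0)"
      using differentiableI D_eq by blast
  qed
  moreover define K where "K = fst (\<phi> z0 - \<psi> z0)"
  moreover have "snd (\<phi> z0 - \<psi> z0) = 0"
    using m z0 by (simp add: \<psi>_def twisted_section_def)
  ultimately have \<phi>_eq: "\<phi> w = \<psi> w + (K, 0)" if "w \<in> U" for w
    using that by (metis add_diff_cancel_left' diff_add_cancel prod.collapse)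
  show ?thesis
  proof (cases "m = 0")
    case True
    then show ?thesis
      using \<phi>_eq by (simp add: \<psi>_def twisted_section_zero)
  next
    case False
    define fs where "fs = (\<lambda>w. F w - qmul K (qinv m))"
    have "twisted_section f R fs lam m w = \<psi> w + (K, 0)" for w
      using qinv_left[OF False]
      by (simp add: fs_def \<psi>_def twisted_section_shift qmul_assoc qmul_qc_one_right)
    then show ?thesis
      using False \<phi>_eq conjugate_surface_shift[OF F, of "qmul K (qinv m)"]
      by (intro disjI2 exI[of _ m] exI[of _ fs]) (simp add: fs_def)
  qed
qed simp

end

theorem mainTheorem5:
  fixes U :: "complex set" and f R :: "complex \<Rightarrow> quat" and \<mu> :: complex
    and \<phi> :: "complex \<Rightarrow> quat \<times> quat"
  assumes "open U" and "connected U" and "simply_connected U"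
    and "conformal_immersion f U" and "minimal_on f U" and "right_normal f R U"
    and "\<mu> \<noteq> 0" and "\<mu> \<noteq> 1"
  shows "dS_parallel f R \<mu> \<phi> U \<longleftrightarrow>
    ((\<exists>n. \<forall>z\<in>U. \<phi> z = (n, 0)) \<or>
     (\<exists>m fs. m \<noteq> 0 \<and> conjugate_surface f fs U \<and>
        (\<forall>z\<in>U. \<phi> z =
           (let c = qc (\<i> * (1 + \<mu>) / (1 - \<mu>));
                \<alpha> = - qmul (fs z) m - qmul (qmul (f z) m) c;
                \<beta> = qmul (R z) m + qmul m c
            in (\<alpha> + qmul (f z) \<beta>, \<beta>)))))"
proof -
  interpret minimal_immersion f R U
    using assms(1,4-6) by unfold_locales
  show ?thesis
    unfolding twisted_section_let_eq
    using parallel_cases[OF assms(3,7,8)] parallel_const parallel_twisted[OF _ assms(7,8)] by blast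
qed

end
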